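(* Assume Condition (C) and $\lambda/2<h<\lambda$. If $\eta\in\mathcal M_{n^+_c}$ contains a full column (or a full row) of $\Lambda$ on which all spins are $0$, then $\eta$ is not a minimizer of $H$ on $\mathcal M_{n^+_c}$.
   Context: Let $\Lambda=\{1,\dots,L\}^2$, $\mathcal X=\{-1,0,+1\}^\Lambda$, $\partial^-\Lambda$ the sites of $\Lambda$ with a nearest neighbour outside $\Lambda$. Hamiltonian: $H(\eta)=\frac J2\sum_{i,j\in\Lambda,|i-j|=1}[\eta(i)-\eta(j)]^2+J\sum_{i\in\partial^-\Lambda}\sum_{j\notin\Lambda,|i-j|=1}\eta(i)^2-\lambda\sum_{i}\eta(i)^2-h\sum_i\eta(i)$. Condition (C): $J$ sufficiently large compared to $\lambda,h>0$; $L>(2J/(\lambda-h))^3$; none of $\tfrac{2J}{\lambda+h},\tfrac{2J}{\lambda-h},\tfrac{2J+\lambda-h}{\lambda+h},\tfrac{J+\lambda+h}{h}$ is an integer. Let $l_c=\lfloor\frac{2J+\lambda-h}{2h}\rfloor+1$ and $n^+_c=l_c(l_c-1)$. For $n\ge0$, $\mathcal M_n$ is the set of configurations with exactly $n$ sites of spin $+1$. *)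

theory Defs
  imports Complex_Main
begin

type_synonym site = "int \<times> int"
type_synonym config = "site \<Rightarrow> int"

definition Lam :: "nat \<Rightarrow> site set" where
  "Lam L = {1..int L} \<times> {1..int L}"

definition nbrs :: "site \<Rightarrow> site set" where
  "nbrs i = {(fst i + 1, snd i), (fst i - 1, snd i), (fst i, snd i + 1), (fst i, snd i - 1)}"

definition inner_boundary :: "nat \<Rightarrow> site set" where
  "inner_boundary L = {i \<in> Lam L. \<exists>j \<in> nbrs i. j \<notin> Lam L}"

text \<open>Configurations: spins in {-1,0,1} on Lambda; fixed to 0 outside Lambda
  (so that each configuration has a unique representative).\<close>
definition configs :: "nat \<Rightarrow> config set" where
  "configs L = {\<eta>. (\<forall>i \<in> Lam L. \<eta> i \<in> {-1, 0, 1}) \<and> (\<forall>i. i \<notin> Lam L \<longrightarrow> \<eta> i = 0)}"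

definition H :: "real \<Rightarrow> real \<Rightarrow> real \<Rightarrow> nat \<Rightarrow> config \<Rightarrow> real" where
  "H J lam h L \<eta> =
     J / 2 * (\<Sum>i\<in>Lam L. \<Sum>j\<in>nbrs i \<inter> Lam L. (real_of_int (\<eta> i - \<eta> j))^2)
   + J * (\<Sum>i\<in>inner_boundary L. \<Sum>j\<in>nbrs i - Lam L. (real_of_int (\<eta> i))^2)
   - lam * (\<Sum>i\<in>Lam L. (real_of_int (\<eta> i))^2)
   - h * (\<Sum>i\<in>Lam L. real_of_int (\<eta> i))"

definition M :: "nat \<Rightarrow> nat \<Rightarrow> config set" where
  "M L n = {\<eta> \<in> configs L. card {i \<in> Lam L. \<eta> i = 1} = n}"

definition is_minimizer_on :: "real \<Rightarrow> real \<Rightarrow> real \<Rightarrow> nat \<Rightarrow> config set \<Rightarrow> config \<Rightarrow> bool" where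
  "is_minimizer_on J lam h L S \<eta> \<longleftrightarrow> \<eta> \<in> S \<and> (\<forall>\<xi> \<in> S. H J lam h L \<eta> \<le> H J lam h L \<xi>)"

definition l_c :: "real \<Rightarrow> real \<Rightarrow> real \<Rightarrow> int" where
  "l_c J lam h = \<lfloor>(2 * J + lam - h) / (2 * h)\<rfloor> + 1"

definition n_c_plus :: "real \<Rightarrow> real \<Rightarrow> real \<Rightarrow> nat" where
  "n_c_plus J lam h = nat (l_c J lam h * (l_c J lam h - 1))"

text \<open>Condition (C) apart from "J sufficiently large", which is expressed
  in the theorem by an existential threshold J0 depending on lambda and h.\<close>
definition cond_C_rest :: "real \<Rightarrow> real \<Rightarrow> real \<Rightarrow> nat \<Rightarrow> bool" where
  "cond_C_rest J lam h L \<longleftrightarrow>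
     real L > (2 * J / (lam - h)) ^ 3 \<and>
     2 * J / (lam + h) \<notin> \<int> \<and> 2 * J / (lam - h) \<notin> \<int> \<and>
     (2 * J + lam - h) / (lam + h) \<notin> \<int> \<and> (J + lam + h) / h \<notin> \<int>"

definition has_zero_column_or_row :: "nat \<Rightarrow> config \<Rightarrow> bool" where
  "has_zero_column_or_row L \<eta> \<longleftrightarrow>
     (\<exists>c \<in> {1..int L}. \<forall>r \<in> {1..int L}. \<eta> (c, r) = 0) \<or>
     (\<exists>r \<in> {1..int L}. \<forall>c \<in> {1..int L}. \<eta> (c, r) = 0)"

end

theory Submission
  imports Defs
begin

text \<open>Up to the bulk terms, \<open>H\<close> is \<open>J\<close> times the bond energy, the sum of the squared spin
  differences over all nearest-neighbour bonds of \<open>\<Lambda>\<close>, the bonds to the zero exterior included;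
  the bulk terms contribute \<open>-(\<lambda> - h)\<close> per nonzero spin and \<open>-2h\<close> per plus spin.
  If column \<open>c\<close> vanishes, every row that is nonzero to the left of \<open>c\<close> pays at least 2,
  so does every row nonzero to the right of \<open>c\<close> and every nonzero column, while the nonzero
  sites lie in the two rectangles spanned by these rows and columns. Optimising this bilinear
  trade-off gives \<open>H \<eta> \<ge> 2J(2L - 1) - (\<lambda> - h)L(L - 1) - 2hn\<close>. The all-minus configuration with
  a bar of \<open>n\<close> plus spins along the bottom row costs \<open>J(4L + 4n + 4) - (\<lambda> - h)L\<^sup>2 - 2hn\<close>, which
  is smaller once \<open>(\<lambda> - h)L > 4Jn + 6J\<close>; for \<open>n = n\<^sub>c\<^sup>+ = O((J/h)\<^sup>2)\<close> this follows from
  \<open>L > (2J/(\<lambda> - h))\<^sup>3\<close>. A zero row is reduced to a zero column by transposition.\<close>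

definition jumps :: "int \<Rightarrow> int \<Rightarrow> (int \<Rightarrow> int) \<Rightarrow> real" where
  "jumps a b f = (\<Sum>k\<in>{a..<b}. (real_of_int (f (k + 1) - f k))\<^sup>2)"

lemma jumps_nonneg: "0 \<le> jumps a b f"
  by (simp add: jumps_def sum_nonneg)

lemma jumps_split:
  assumes "a \<le> m" "m \<le> b"
  shows "jumps a b f = jumps a m f + jumps m b f"
proof -
  have "{a..<b} = {a..<m} \<union> {m..<b}" using assms by auto
  then show ?thesis unfolding jumps_def by (simp add: sum.union_disjoint)
qed

lemma jumps_ge_one:
  assumes "a \<le> b" "f a \<noteq> f b"
  shows "1 \<le> jumps a b f"
  using assms
proof (induction b rule: int_ge_induct)
  case base
  then show ?case by simp
next
  case (step b)
  have split: "jumps a (b + 1) f = jumps a b f + (real_of_int (f (b + 1) - f b))\<^sup>2"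
    using jumps_split[of a b "b + 1" f] step.hyps
    by (simp add: jumps_def atLeastLessThanPlusOne_atLeastAtMost_int)
  show ?case
  proof (cases "f a = f b")
    case True
    then have "f (b + 1) - f b \<noteq> 0" using step.prems by simp
    then have "1 \<le> (real_of_int (f (b + 1) - f b))\<^sup>2"
      by (metis of_int_1_le_iff of_int_power zero_less_power2 int_one_le_iff_zero_less)
    then show ?thesis using split jumps_nonneg[of a b f] by linarith
  next
    case False
    then show ?thesis using split step.IH step.hyps by (simp add: add_increasing2)
  qed
qed

lemma jumps_ge_two:
  assumes "f a = 0" "f b = 0" "x \<in> {a..b}" "f x \<noteq> 0"
  shows "2 \<le> jumps a b f"
  using assms jumps_split[of a x b f] jumps_ge_one[of a x f] jumps_ge_one[of x b f] by auto

lemma mult_card_le_sum: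
  fixes g :: "'a \<Rightarrow> real"
  assumes "finite A" "B \<subseteq> A" "\<And>x. x \<in> A \<Longrightarrow> 0 \<le> g x" "\<And>x. x \<in> B \<Longrightarrow> c \<le> g x"
  shows "c * real (card B) \<le> (\<Sum>x\<in>A. g x)"
proof -
  have "c * real (card B) = (\<Sum>x\<in>B. c)" by simp
  also have "\<dots> \<le> (\<Sum>x\<in>B. g x)" using assms(4) by (rule sum_mono)
  also have "\<dots> \<le> (\<Sum>x\<in>A. g x)" using assms(1-3) by (intro sum_mono2) auto
  finally show ?thesis .
qed

lemma affine_ge_min_endpoints:
  fixes p q r L :: real
  assumes "0 \<le> r" "r \<le> L"
  shows "min p (p + q * L) \<le> p + q * r"
proof (cases "0 \<le> q")
  case True
  then show ?thesis using assms by (simp add: min.coboundedI1)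
next
  case False
  then have "q * L \<le> q * r" using assms by (intro mult_left_mono_neg) auto
  then show ?thesis by (simp add: min.coboundedI2)
qed

text \<open>\<open>aL, rL\<close> and \<open>aR, rR\<close> count the nonzero columns and rows on either side of a zero column.\<close>

lemma bilinear_two_block_bound:
  fixes J d aL aR rL rR L :: real
  assumes "0 \<le> J" "0 \<le> aL" "0 \<le> aR" "0 \<le> rL" "0 \<le> rR" "rL \<le> L" "rR \<le> L"
    and "aL + aR \<le> L - 1" and "2 * J \<le> d * L" and "2 * J * (2 * L - 1) \<le> d * L * (L - 1)"
  shows "2 * J * (2 * L - 1) - d * L * (L - 1) \<le> 2 * J * (rL + rR + aL + aR) - d * (aL * rL + aR * rR)"
proof -
  define \<psi> where "\<psi> a = 2 * J * L - a * (d * L - 2 * J)" for a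
  have block: "min 0 (\<psi> a) \<le> 2 * J * (a + r) - d * a * r" if "0 \<le> a" "0 \<le> r" "r \<le> L" for a r
  proof -
    have "min (2 * J * a) (2 * J * a + (2 * J - d * a) * L) \<le> 2 * J * a + (2 * J - d * a) * r"
      using that(2,3) by (rule affine_ge_min_endpoints)
    moreover have "0 \<le> 2 * J * a" using assms(1) that(1) by simp
    ultimately show ?thesis unfolding \<psi>_def by (simp add: algebra_simps)
  qed
  have bound: "a * (d * L - 2 * J) \<le> (L - 1) * (d * L - 2 * J)" if "a \<le> L - 1" for a
    using that assms(9) by (intro mult_right_mono) auto
  have \<psi>_ge: "2 * J * (2 * L - 1) - d * L * (L - 1) \<le> \<psi> a" if "a \<le> L - 1" for a
    using bound[OF that] unfolding \<psi>_def by (simp add: algebra_simps)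
  have "2 * J * (2 * L - 1) - d * L * (L - 1) \<le> \<psi> aL + \<psi> aR"
  proof -
    have "\<psi> aL + \<psi> aR = \<psi> (aL + aR) + 2 * J * L"
      unfolding \<psi>_def by (simp add: algebra_simps)
    moreover have "0 \<le> 2 * J * L" using assms(1-3,8) by simp
    ultimately show ?thesis using \<psi>_ge[OF assms(8)] by linarith
  qed
  then have "2 * J * (2 * L - 1) - d * L * (L - 1) \<le> min 0 (\<psi> aL) + min 0 (\<psi> aR)"
    using \<psi>_ge[of aL] \<psi>_ge[of aR] assms(2,3,8,10)
    unfolding min_def by (smt (verit))
  also have "\<dots> \<le> 2 * J * (rL + rR + aL + aR) - d * (aL * rL + aR * rR)"
    using block[of aL rL] block[of aR rR] assms by (simp add: algebra_simps)
  finally show ?thesis .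
qed

definition bond_energy :: "nat \<Rightarrow> config \<Rightarrow> real" where
  "bond_energy L \<eta> =
     (\<Sum>y\<in>{1..int L}. jumps 0 (int L + 1) (\<lambda>x. \<eta> (x, y)))
   + (\<Sum>x\<in>{1..int L}. jumps 0 (int L + 1) (\<lambda>y. \<eta> (x, y)))"

lemma configs_outside: "\<eta> \<in> configs L \<Longrightarrow> i \<notin> Lam L \<Longrightarrow> \<eta> i = 0"
  by (cases i) (simp add: configs_def)

lemma finite_Lam [simp]: "finite (Lam L)"
  by (simp add: Lam_def)

lemma sum_nbrs:
  "(\<Sum>j\<in>nbrs (x, y). G j) = G (x + 1, y) + G (x - 1, y) + G (x, y + 1) + G (x, y - 1)"
  by (simp add: nbrs_def add.assoc)

text \<open>A bond inside \<open>{1..L}\<close> is seen from both of its ends, a bond leaving the interval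
  only from its inner end; the weight 2 compensates.\<close>

lemma sum_interval_bonds:
  fixes g :: "int \<Rightarrow> real"
  assumes "1 \<le> L"
  shows "(\<Sum>x\<in>{1..L}. (if x + 1 \<in> {1..L} then 1 else 2) * g x
                     + (if x - 1 \<in> {1..L} then 1 else 2) * g (x - 1))
         = 2 * (\<Sum>x\<in>{0..<L + 1}. g x)"
proof -
  have right: "(\<Sum>x\<in>{1..L}. (if x + 1 \<in> {1..L} then 1 else 2) * g x)
             = (\<Sum>x\<in>{1..<L}. g x) + 2 * g L"
  proof -
    have "{1..L} = insert L {1..<L}" using assms by auto
    moreover have "(\<Sum>x\<in>{1..<L}. (if x + 1 \<in> {1..L} then 1 else 2) * g x) = (\<Sum>x\<in>{1..<L}. g x)"
      by (rule sum.cong) auto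
    ultimately show ?thesis by simp
  qed
  have left: "(\<Sum>x\<in>{1..L}. (if x - 1 \<in> {1..L} then 1 else 2) * g (x - 1))
            = (\<Sum>x\<in>{1..<L}. g x) + 2 * g 0"
  proof -
    have "{1..L} = insert 1 {2..L}" using assms by auto
    moreover have "(\<Sum>x\<in>{2..L}. (if x - 1 \<in> {1..L} then 1 else 2) * g (x - 1)) = (\<Sum>x\<in>{2..L}. g (x - 1))"
      by (rule sum.cong) auto
    moreover have "(\<Sum>x\<in>{2..L}. g (x - 1)) = (\<Sum>x\<in>{1..<L}. g x)"
      by (rule sum.reindex_bij_witness[of _ "\<lambda>x. x + 1" "\<lambda>x. x - 1"]) auto
    ultimately show ?thesis by simp
  qed
  have "{0..<L + 1} = insert 0 (insert L {1..<L})" using assms by auto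
  then have "(\<Sum>x\<in>{0..<L + 1}. g x) = g 0 + g L + (\<Sum>x\<in>{1..<L}. g x)"
    using assms by simp
  then show ?thesis unfolding sum.distrib right left by simp
qed

lemma boundary_sum_eq_outer_bonds:
  assumes "\<eta> \<in> configs L"
  shows "(\<Sum>i\<in>inner_boundary L. \<Sum>j\<in>nbrs i - Lam L. (real_of_int (\<eta> i))\<^sup>2)
       = (\<Sum>i\<in>Lam L. \<Sum>j\<in>nbrs i - Lam L. (real_of_int (\<eta> i - \<eta> j))\<^sup>2)"
proof -
  have "(\<Sum>i\<in>inner_boundary L. \<Sum>j\<in>nbrs i - Lam L. (real_of_int (\<eta> i))\<^sup>2)
      = (\<Sum>i\<in>Lam L. \<Sum>j\<in>nbrs i - Lam L. (real_of_int (\<eta> i))\<^sup>2)"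
  proof (rule sum.mono_neutral_left)
    show "\<forall>i\<in>Lam L - inner_boundary L. (\<Sum>j\<in>nbrs i - Lam L. (real_of_int (\<eta> i))\<^sup>2) = 0"
    proof
      fix i assume "i \<in> Lam L - inner_boundary L"
      then have "nbrs i - Lam L = {}" by (auto simp: inner_boundary_def)
      then show "(\<Sum>j\<in>nbrs i - Lam L. (real_of_int (\<eta> i))\<^sup>2) = 0"
        by (simp only: sum.empty)
    qed
  qed (auto simp: inner_boundary_def)
  also have "\<dots> = (\<Sum>i\<in>Lam L. \<Sum>j\<in>nbrs i - Lam L. (real_of_int (\<eta> i - \<eta> j))\<^sup>2)"
    using configs_outside[OF assms] by (intro sum.cong refl) simp
  finally show ?thesis .
qed

lemma jumps_as_line_sum:
  assumes "1 \<le> L"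
  shows "(\<Sum>x\<in>{1..L}. (if x + 1 \<in> {1..L} then 1 else 2) * (real_of_int (f x - f (x + 1)))\<^sup>2
                     + (if x - 1 \<in> {1..L} then 1 else 2) * (real_of_int (f x - f (x - 1)))\<^sup>2)
         = 2 * jumps 0 (L + 1) f"
  using sum_interval_bonds[OF assms, of "\<lambda>x. (real_of_int (f (x + 1) - f x))\<^sup>2"]
  by (simp add: jumps_def power2_commute)

lemma nbr_sums_eq_bond_energy:
  assumes "\<eta> \<in> configs L"
  shows "(\<Sum>i\<in>Lam L. \<Sum>j\<in>nbrs i \<inter> Lam L. (real_of_int (\<eta> i - \<eta> j))\<^sup>2)
       + 2 * (\<Sum>i\<in>inner_boundary L. \<Sum>j\<in>nbrs i - Lam L. (real_of_int (\<eta> i))\<^sup>2)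
       = 2 * bond_energy L \<eta>"
proof (cases "L = 0")
  case True
  then show ?thesis by (simp add: Lam_def inner_boundary_def bond_energy_def)
next
  case False
  then have L1: "1 \<le> int L" by simp
  define I where "I = {1..int L}"
  define D where "D i j = (real_of_int (\<eta> i - \<eta> j))\<^sup>2" for i j
  define w where "w j = (if j \<in> Lam L then 1 else (2::real))" for j
  define hb where "hb x y = w (x + 1, y) * D (x, y) (x + 1, y) + w (x - 1, y) * D (x, y) (x - 1, y)" for x y
  define vb where "vb x y = w (x, y + 1) * D (x, y) (x, y + 1) + w (x, y - 1) * D (x, y) (x, y - 1)" for x y
  have "(\<Sum>j\<in>nbrs i \<inter> Lam L. D i j) + 2 * (\<Sum>j\<in>nbrs i - Lam L. D i j) = (\<Sum>j\<in>nbrs i. w j * D i j)" for i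
  proof -
    have "(\<Sum>j\<in>nbrs i. w j * D i j) = (\<Sum>j\<in>nbrs i \<inter> Lam L. w j * D i j) + (\<Sum>j\<in>nbrs i - Lam L. w j * D i j)"
      by (rule sum.Int_Diff) (simp add: nbrs_def)
    then show ?thesis by (simp add: w_def sum_distrib_left)
  qed
  then have "(\<Sum>i\<in>Lam L. \<Sum>j\<in>nbrs i \<inter> Lam L. D i j)
       + 2 * (\<Sum>i\<in>inner_boundary L. \<Sum>j\<in>nbrs i - Lam L. (real_of_int (\<eta> i))\<^sup>2)
       = (\<Sum>i\<in>Lam L. \<Sum>j\<in>nbrs i. w j * D i j)"
    unfolding boundary_sum_eq_outer_bonds[OF assms] D_def[symmetric]
    by (simp add: sum_distrib_left flip: sum.distrib)
  also have "\<dots> = (\<Sum>(x, y)\<in>I \<times> I. hb x y + vb x y)"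
    unfolding Lam_def I_def by (intro sum.cong refl) (auto simp: sum_nbrs hb_def vb_def)
  also have "\<dots> = (\<Sum>x\<in>I. \<Sum>y\<in>I. hb x y + vb x y)"
    by (rule sum.cartesian_product[symmetric])
  also have "\<dots> = (\<Sum>y\<in>I. \<Sum>x\<in>I. hb x y) + (\<Sum>x\<in>I. \<Sum>y\<in>I. vb x y)"
    by (simp add: sum.distrib sum.swap[of hb])
  also have "\<dots> = (\<Sum>y\<in>I. 2 * jumps 0 (int L + 1) (\<lambda>x. \<eta> (x, y)))
                 + (\<Sum>x\<in>I. 2 * jumps 0 (int L + 1) (\<lambda>y. \<eta> (x, y)))"
  proof (intro arg_cong2[where f = "(+)"] sum.cong refl)
    fix y assume "y \<in> I"
    then show "(\<Sum>x\<in>I. hb x y) = 2 * jumps 0 (int L + 1) (\<lambda>x. \<eta> (x, y))"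
      unfolding jumps_as_line_sum[OF L1, symmetric] I_def
      by (intro sum.cong refl) (simp add: hb_def w_def D_def Lam_def)
  next
    fix x assume "x \<in> I"
    then show "(\<Sum>y\<in>I. vb x y) = 2 * jumps 0 (int L + 1) (\<lambda>y. \<eta> (x, y))"
      unfolding jumps_as_line_sum[OF L1, symmetric] I_def
      by (intro sum.cong refl) (simp add: vb_def w_def D_def Lam_def)
  qed
  finally show ?thesis by (simp add: bond_energy_def I_def sum_distrib_left D_def)
qed

lemma spin_sum_eq_card:
  assumes "\<eta> \<in> configs L"
  shows "lam * (\<Sum>i\<in>Lam L. (real_of_int (\<eta> i))\<^sup>2) + h * (\<Sum>i\<in>Lam L. real_of_int (\<eta> i))
       = (lam - h) * card {i\<in>Lam L. \<eta> i \<noteq> 0} + 2 * h * card {i\<in>Lam L. \<eta> i = 1}"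
proof -
  have "lam * (\<Sum>i\<in>Lam L. (real_of_int (\<eta> i))\<^sup>2) + h * (\<Sum>i\<in>Lam L. real_of_int (\<eta> i))
      = (\<Sum>i\<in>Lam L. lam * (real_of_int (\<eta> i))\<^sup>2 + h * real_of_int (\<eta> i))"
    by (simp add: sum.distrib sum_distrib_left)
  also have "\<dots> = (\<Sum>i\<in>Lam L. (lam - h) * of_bool (\<eta> i \<noteq> 0) + 2 * h * of_bool (\<eta> i = 1))"
    using assms by (intro sum.cong refl) (auto simp: configs_def)
  also have "\<dots> = (lam - h) * card {i\<in>Lam L. \<eta> i \<noteq> 0} + 2 * h * card {i\<in>Lam L. \<eta> i = 1}"
    by (simp add: sum.distrib Int_def flip: sum_distrib_left)
  finally show ?thesis .
qed

lemma H_eq_bond_energy: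
  assumes "\<eta> \<in> configs L"
  shows "H J lam h L \<eta> = J * bond_energy L \<eta>
           - (lam - h) * card {i\<in>Lam L. \<eta> i \<noteq> 0} - 2 * h * card {i\<in>Lam L. \<eta> i = 1}"
proof -
  have "J / 2 * (\<Sum>i\<in>Lam L. \<Sum>j\<in>nbrs i \<inter> Lam L. (real_of_int (\<eta> i - \<eta> j))\<^sup>2)
      + J * (\<Sum>i\<in>inner_boundary L. \<Sum>j\<in>nbrs i - Lam L. (real_of_int (\<eta> i))\<^sup>2)
      = J / 2 * (2 * bond_energy L \<eta>)"
    unfolding nbr_sums_eq_bond_energy[OF assms, symmetric] by (simp add: algebra_simps)
  then show ?thesis
    using spin_sum_eq_card[OF assms, of lam h] unfolding H_def by simp
qed

definition nonzero_rows :: "nat \<Rightarrow> config \<Rightarrow> int set \<Rightarrow> int set" where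
  "nonzero_rows L \<eta> X = {y\<in>{1..int L}. \<exists>x\<in>X. \<eta> (x, y) \<noteq> 0}"

definition nonzero_cols :: "nat \<Rightarrow> config \<Rightarrow> int set \<Rightarrow> int set" where
  "nonzero_cols L \<eta> X = {x\<in>X. \<exists>y\<in>{1..int L}. \<eta> (x, y) \<noteq> 0}"

lemma nonzero_rows_subset: "nonzero_rows L \<eta> X \<subseteq> {1..int L}"
  by (auto simp: nonzero_rows_def)

lemma nonzero_cols_subset: "nonzero_cols L \<eta> X \<subseteq> X"
  by (auto simp: nonzero_cols_def)

lemma card_nonzero_rows_le: "card (nonzero_rows L \<eta> X) \<le> L"
  using card_mono[OF _ nonzero_rows_subset] by simp

lemma finite_nonzero_rows [simp]: "finite (nonzero_rows L \<eta> X)"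
  using finite_subset[OF nonzero_rows_subset] by simp

lemma finite_nonzero_cols [simp]: "finite X \<Longrightarrow> finite (nonzero_cols L \<eta> X)"
  using finite_subset[OF nonzero_cols_subset] .

lemma row_jumps_ge_nonzero_rows:
  assumes cf: "\<eta> \<in> configs L" and c: "c \<in> {1..int L}" and zero: "\<forall>y\<in>{1..int L}. \<eta> (c, y) = 0"
  shows "2 * real (card (nonzero_rows L \<eta> {1..<c})) + 2 * real (card (nonzero_rows L \<eta> {c<..int L}))
         \<le> (\<Sum>y\<in>{1..int L}. jumps 0 (int L + 1) (\<lambda>x. \<eta> (x, y)))"
proof -
  have out: "\<eta> (0, y) = 0" "\<eta> (int L + 1, y) = 0" for y
    using configs_outside[OF cf] by (auto simp: Lam_def)
  have "2 * real (card (nonzero_rows L \<eta> {1..<c})) \<le> (\<Sum>y\<in>{1..int L}. jumps 0 c (\<lambda>x. \<eta> (x, y)))"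
  proof (rule mult_card_le_sum)
    fix y assume "y \<in> nonzero_rows L \<eta> {1..<c}"
    then obtain x where "y \<in> {1..int L}" "x \<in> {1..<c}" "\<eta> (x, y) \<noteq> 0" by (auto simp: nonzero_rows_def)
    moreover from this have "x \<in> {0..c}" by simp
    ultimately show "2 \<le> jumps 0 c (\<lambda>x. \<eta> (x, y))" using jumps_ge_two[of "\<lambda>x. \<eta> (x, y)" 0 c x] out zero by simp
  qed (auto simp: nonzero_rows_def jumps_nonneg)
  moreover have "2 * real (card (nonzero_rows L \<eta> {c<..int L})) \<le> (\<Sum>y\<in>{1..int L}. jumps c (int L + 1) (\<lambda>x. \<eta> (x, y)))"
  proof (rule mult_card_le_sum)
    fix y assume "y \<in> nonzero_rows L \<eta> {c<..int L}"
    then obtain x where "y \<in> {1..int L}" "x \<in> {c<..int L}" "\<eta> (x, y) \<noteq> 0" by (auto simp: nonzero_rows_def)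
    moreover from this have "x \<in> {c..int L + 1}" by simp
    ultimately show "2 \<le> jumps c (int L + 1) (\<lambda>x. \<eta> (x, y))"
      using jumps_ge_two[of "\<lambda>x. \<eta> (x, y)" c "int L + 1" x] out zero by simp
  qed (auto simp: nonzero_rows_def jumps_nonneg)
  moreover have "jumps 0 (int L + 1) f = jumps 0 c f + jumps c (int L + 1) f" for f
    using c by (intro jumps_split) auto
  ultimately show ?thesis by (simp add: sum.distrib)
qed

lemma col_jumps_ge_nonzero_cols:
  assumes cf: "\<eta> \<in> configs L" and X: "X \<subseteq> {1..int L}"
  shows "2 * real (card (nonzero_cols L \<eta> X)) \<le> (\<Sum>x\<in>{1..int L}. jumps 0 (int L + 1) (\<lambda>y. \<eta> (x, y)))"
proof (rule mult_card_le_sum)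
  fix x assume "x \<in> nonzero_cols L \<eta> X"
  then obtain y where "y \<in> {1..int L}" "\<eta> (x, y) \<noteq> 0" by (auto simp: nonzero_cols_def)
  moreover from this have "y \<in> {0..int L + 1}" by simp
  moreover have "\<eta> (x, 0) = 0" "\<eta> (x, int L + 1) = 0"
    using configs_outside[OF cf] by (auto simp: Lam_def)
  ultimately show "2 \<le> jumps 0 (int L + 1) (\<lambda>y. \<eta> (x, y))"
    using jumps_ge_two[of "\<lambda>y. \<eta> (x, y)" 0 "int L + 1" y] by simp
qed (use X in \<open>auto simp: nonzero_cols_def jumps_nonneg\<close>)

lemma nonzero_sites_subset_blocks:
  assumes zero: "\<forall>y\<in>{1..int L}. \<eta> (c, y) = 0"
  shows "{i\<in>Lam L. \<eta> i \<noteq> 0}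
         \<subseteq> nonzero_cols L \<eta> {1..<c} \<times> nonzero_rows L \<eta> {1..<c}
           \<union> nonzero_cols L \<eta> {c<..int L} \<times> nonzero_rows L \<eta> {c<..int L}"
proof
  fix i assume "i \<in> {i\<in>Lam L. \<eta> i \<noteq> 0}"
  then obtain x y where xy: "i = (x, y)" "x \<in> {1..int L}" "y \<in> {1..int L}" "\<eta> (x, y) \<noteq> 0"
    by (cases i) (auto simp: Lam_def)
  moreover have "x \<noteq> c" using zero xy by auto
  ultimately have "x \<in> {1..<c} \<or> x \<in> {c<..int L}" by auto
  then show "i \<in> nonzero_cols L \<eta> {1..<c} \<times> nonzero_rows L \<eta> {1..<c}
              \<union> nonzero_cols L \<eta> {c<..int L} \<times> nonzero_rows L \<eta> {c<..int L}"
    using xy unfolding nonzero_cols_def nonzero_rows_def by blast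
qed

lemma zero_column_energy_bound:
  fixes J d :: real
  assumes cf: "\<eta> \<in> configs L" and c: "c \<in> {1..int L}" and zero: "\<forall>y\<in>{1..int L}. \<eta> (c, y) = 0"
    and J: "0 \<le> J" and d: "0 \<le> d"
    and dL: "2 * J \<le> d * real L" and quad: "2 * J * (2 * real L - 1) \<le> d * real L * (real L - 1)"
  shows "2 * J * (2 * real L - 1) - d * real L * (real L - 1) \<le> J * bond_energy L \<eta> - d * card {i\<in>Lam L. \<eta> i \<noteq> 0}"
proof -
  define aL aR rL rR where "aL = card (nonzero_cols L \<eta> {1..<c})" and "aR = card (nonzero_cols L \<eta> {c<..int L})"
    and "rL = card (nonzero_rows L \<eta> {1..<c})" and "rR = card (nonzero_rows L \<eta> {c<..int L})"
  have "nonzero_cols L \<eta> ({1..<c} \<union> {c<..int L}) = nonzero_cols L \<eta> {1..<c} \<union> nonzero_cols L \<eta> {c<..int L}"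
    by (auto simp: nonzero_cols_def)
  moreover have "card (nonzero_cols L \<eta> {1..<c} \<union> nonzero_cols L \<eta> {c<..int L}) = aL + aR"
    unfolding aL_def aR_def by (rule card_Un_disjoint) (simp, simp, auto simp: nonzero_cols_def)
  ultimately have "aL + aR = card (nonzero_cols L \<eta> ({1..<c} \<union> {c<..int L}))" by simp
  also have "\<dots> \<le> card ({1..<c} \<union> {c<..int L})" by (rule card_mono[OF _ nonzero_cols_subset]) simp
  also have "{1..<c} \<union> {c<..int L} = {1..int L} - {c}" using c by auto
  also have "card \<dots> = L - 1" using c by (simp add: card_Diff_singleton)
  finally have a: "aL + aR + 1 \<le> L" using c by auto
  have "2 * real (aL + aR) \<le> (\<Sum>x\<in>{1..int L}. jumps 0 (int L + 1) (\<lambda>y. \<eta> (x, y)))"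
    using col_jumps_ge_nonzero_cols[OF cf, of "{1..<c} \<union> {c<..int L}"] \<open>aL + aR = _\<close> c
    by (simp add: subset_iff)
  then have energy: "2 * (real rL + real rR + real aL + real aR) \<le> bond_energy L \<eta>"
    using row_jumps_ge_nonzero_rows[OF cf c zero] unfolding bond_energy_def rL_def rR_def by simp
  have "card {i\<in>Lam L. \<eta> i \<noteq> 0} \<le> card (nonzero_cols L \<eta> {1..<c} \<times> nonzero_rows L \<eta> {1..<c}
           \<union> nonzero_cols L \<eta> {c<..int L} \<times> nonzero_rows L \<eta> {c<..int L})"
    by (rule card_mono[OF _ nonzero_sites_subset_blocks[OF zero]]) simp
  also have "\<dots> \<le> aL * rL + aR * rR"
    unfolding aL_def aR_def rL_def rR_def by (rule order_trans[OF card_Un_le]) (simp add: card_cartesian_product)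
  finally have sites: "real (card {i\<in>Lam L. \<eta> i \<noteq> 0}) \<le> real aL * real rL + real aR * real rR"
    by (simp flip: of_nat_mult of_nat_add)
  have "2 * J * (2 * real L - 1) - d * real L * (real L - 1)
      \<le> 2 * J * (real rL + real rR + real aL + real aR) - d * (real aL * real rL + real aR * real rR)"
    using J dL quad a card_nonzero_rows_le unfolding rL_def rR_def
    by (intro bilinear_two_block_bound) auto
  also have "\<dots> \<le> J * bond_energy L \<eta> - d * card {i\<in>Lam L. \<eta> i \<noteq> 0}"
    using mult_left_mono[OF energy J] mult_left_mono[OF sites d] by (simp add: algebra_simps)
  finally show ?thesis .
qed

definition transpose_config :: "config \<Rightarrow> config" where
  "transpose_config \<eta> = (\<lambda>i. \<eta> (snd i, fst i))"

lemma transpose_config_configs: "\<eta> \<in> configs L \<Longrightarrow> transpose_config \<eta> \<in> configs L"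
  by (auto simp: configs_def transpose_config_def Lam_def)

lemma bond_energy_transpose_config: "bond_energy L (transpose_config \<eta>) = bond_energy L \<eta>"
  by (simp add: bond_energy_def transpose_config_def)

lemma card_nonzero_transpose_config:
  "card {i\<in>Lam L. transpose_config \<eta> i \<noteq> 0} = card {i\<in>Lam L. \<eta> i \<noteq> 0}"
proof -
  have "{i\<in>Lam L. transpose_config \<eta> i \<noteq> 0} = prod.swap ` {i\<in>Lam L. \<eta> i \<noteq> 0}"
    by (auto simp: transpose_config_def Lam_def image_iff)
  then show ?thesis by (simp add: card_image)
qed

lemma zero_line_energy_bound:
  fixes J d :: real
  assumes cf: "\<eta> \<in> configs L" and zero: "has_zero_column_or_row L \<eta>"
    and J: "0 \<le> J" and d: "0 \<le> d" and large: "4 * J \<le> d * (real L - 1)"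
  shows "2 * J * (2 * real L - 1) - d * real L * (real L - 1) \<le> J * bond_energy L \<eta> - d * card {i\<in>Lam L. \<eta> i \<noteq> 0}"
proof -
  have dL: "2 * J \<le> d * real L" using large J d by (simp add: algebra_simps)
  have "real L * (4 * J) \<le> real L * (d * (real L - 1))"
    using large by (intro mult_left_mono) auto
  then have quad: "2 * J * (2 * real L - 1) \<le> d * real L * (real L - 1)"
    using J by (simp add: algebra_simps)
  consider (col) c where "c \<in> {1..int L}" "\<forall>y\<in>{1..int L}. \<eta> (c, y) = 0"
    | (row) r where "r \<in> {1..int L}" "\<forall>x\<in>{1..int L}. transpose_config \<eta> (r, x) = 0"
    using zero unfolding has_zero_column_or_row_def transpose_config_def by auto
  then show ?thesis
  proof cases
    case col
    from zero_column_energy_bound[OF cf col J d dL quad] show ?thesis .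
  next
    case row
    then show ?thesis
      using zero_column_energy_bound[OF transpose_config_configs[OF cf] row J d dL quad]
      by (simp add: bond_energy_transpose_config card_nonzero_transpose_config)
  qed
qed

definition bar_config :: "nat \<Rightarrow> nat \<Rightarrow> config" where
  "bar_config L n = (\<lambda>i. if i \<in> Lam L then (if snd i = 1 \<and> fst i \<le> int n then 1 else -1) else 0)"

lemma bar_config_configs: "bar_config L n \<in> configs L"
  by (auto simp: configs_def bar_config_def)

lemma card_plus_bar_config:
  assumes "n \<le> L"
  shows "card {i\<in>Lam L. bar_config L n i = 1} = n"
proof -
  have "{i\<in>Lam L. bar_config L n i = 1} = {1..int n} \<times> {1}"
    using assms by (auto simp: bar_config_def Lam_def)
  then show ?thesis by (simp add: card_cartesian_product)
qed

lemma card_nonzero_bar_config: "card {i\<in>Lam L. bar_config L n i \<noteq> 0} = L * L"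
proof -
  have "{i\<in>Lam L. bar_config L n i \<noteq> 0} = Lam L" by (auto simp: bar_config_def)
  then show ?thesis by (simp add: Lam_def card_cartesian_product)
qed

lemma bond_energy_bar_config:
  assumes "1 \<le> n" "n < L"
  shows "bond_energy L (bar_config L n) = 4 * real L + 4 * real n + 4"
proof -
  have row: "jumps 0 (int L + 1) (\<lambda>x. bar_config L n (x, y)) = 2 + (if y = 1 then 4 else 0)"
    if "y \<in> {1..int L}" for y
  proof -
    have "jumps 0 (int L + 1) (\<lambda>x. bar_config L n (x, y))
        = (\<Sum>x\<in>{0..<int L + 1}. (if x = 0 then 1 else 0) + (if x = int L then 1 else 0)
                                 + (if x = int n \<and> y = 1 then 4 else 0))"
      unfolding jumps_def using assms that by (intro sum.cong refl) (auto simp: bar_config_def Lam_def)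
    then show ?thesis using assms by (simp add: sum.distrib)
  qed
  have col: "jumps 0 (int L + 1) (\<lambda>y. bar_config L n (x, y)) = 2 + (if x \<le> int n then 4 else 0)"
    if "x \<in> {1..int L}" for x
  proof -
    have "jumps 0 (int L + 1) (\<lambda>y. bar_config L n (x, y))
        = (\<Sum>y\<in>{0..<int L + 1}. (if y = 0 then 1 else 0) + (if y = int L then 1 else 0)
                                 + (if y = 1 \<and> x \<le> int n then 4 else 0))"
      unfolding jumps_def using assms that by (intro sum.cong refl) (auto simp: bar_config_def Lam_def)
    then show ?thesis using assms by (simp add: sum.distrib)
  qed
  have "{x\<in>{1..int L}. x \<le> int n} = {1..int n}" using assms by auto
  then have "(\<Sum>x\<in>{1..int L}. 2 + (if x \<le> int n then 4 else (0::real))) = 2 * real L + 4 * real n"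
    by (simp add: sum.distrib sum.inter_filter[symmetric])
  moreover have "(\<Sum>y\<in>{1..int L}. 2 + (if y = 1 then 4 else (0::real))) = 2 * real L + 4"
    using assms by (simp add: sum.distrib)
  ultimately show ?thesis unfolding bond_energy_def using row col by simp
qed

lemma n_c_plus_bounds:
  fixes J lam h :: real
  defines "x \<equiv> (2 * J + (lam - h)) / (2 * h)"
  assumes "0 < h" "h < lam" "h \<le> J"
  shows "1 \<le> n_c_plus J lam h" and "real (n_c_plus J lam h) \<le> (x + 1) * x"
proof -
  define l where "l = l_c J lam h"
  have l: "l = \<lfloor>x\<rfloor> + 1" by (simp add: l_def l_c_def x_def algebra_simps)
  have x1: "1 \<le> x" using assms unfolding x_def by (simp add: field_simps)
  then have l2: "2 \<le> l" using l by linarith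
  then have n: "real (n_c_plus J lam h) = real_of_int l * (real_of_int l - 1)"
    by (simp add: n_c_plus_def l_def[symmetric])
  have "2 * 1 \<le> real_of_int l * (real_of_int l - 1)"
    using l2 by (intro mult_mono) auto
  then show "1 \<le> n_c_plus J lam h" using n by linarith
  show "real (n_c_plus J lam h) \<le> (x + 1) * x"
    unfolding n using l l2 x1 by (intro mult_mono) linarith+
qed

lemma volume_dominates_critical_size:
  fixes J d h x n L :: real
  assumes d: "0 < d" "d < h" and J: "5 * d \<le> J" "h \<le> J"
    and x: "x = (2 * J + d) / (2 * h)" and n: "n \<le> (x + 1) * x" and L: "(2 * J / d) ^ 3 < L"
  shows "4 * J * n + 6 * J < d * L"
proof -
  define u where "u = J / d"
  have u5: "5 \<le> u" using J d by (simp add: u_def field_simps)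
  have "x \<le> J / h + 1 / 2" using d unfolding x by (simp add: field_simps)
  also have "J / h \<le> u" unfolding u_def using d J by (intro divide_left_mono) auto
  finally have "x \<le> u + 1 / 2" by simp
  moreover have "0 \<le> x" using x d J by simp
  ultimately have "(x + 1) * x \<le> (u + 3 / 2) * (u + 1 / 2)" by (intro mult_mono) auto
  moreover have "(u + 3 / 2) * (u + 1 / 2) = u * u + 2 * u + 3 / 4" by (simp add: field_simps)
  ultimately have "n \<le> u * u + 2 * u + 3 / 4" using n by linarith
  moreover have "5 * u \<le> u * u" using u5 by (simp add: mult_right_mono)
  ultimately have "4 * n + 6 < 8 * u ^ 2" using u5 unfolding power2_eq_square by linarith
  moreover have "0 < J" using J d by linarith
  ultimately have "J * (4 * n + 6) < J * (8 * u ^ 2)" by simp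
  then have "4 * J * n + 6 * J < J * (8 * u ^ 2)" by (simp add: algebra_simps)
  also have "J * (8 * u ^ 2) = d * (2 * J / d) ^ 3"
    using d by (simp add: u_def field_simps power3_eq_cube power2_eq_square)
  also have "\<dots> < d * L" using L d by simp
  finally show ?thesis .
qed

lemma bar_config_beats_zero_line:
  fixes J lam h :: real
  assumes \<eta>: "\<eta> \<in> M L n" and zero: "has_zero_column_or_row L \<eta>"
    and gap: "0 < lam - h" "lam - h \<le> J" and n: "1 \<le> n"
    and margin: "4 * J * real n + 6 * J < (lam - h) * real L"
  shows "bar_config L n \<in> M L n" and "H J lam h L (bar_config L n) < H J lam h L \<eta>"
proof -
  define d where "d = lam - h"
  have J: "0 < J" using gap by (simp add: d_def)
  have "(lam - h) * real L \<le> J * real L" using gap by (intro mult_right_mono) auto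
  moreover have "0 \<le> J * real L" using J by simp
  ultimately have "4 * J * real n < 4 * J * real L" using margin J by linarith
  then have nL: "n < L" using J by simp
  then show "bar_config L n \<in> M L n"
    using bar_config_configs card_plus_bar_config by (simp add: M_def)
  have "4 * J \<le> 4 * J * real n" using n J by simp
  then have large: "4 * J \<le> d * (real L - 1)"
    using margin gap unfolding d_def right_diff_distrib mult_1_right by linarith
  have cf: "\<eta> \<in> configs L" and plus: "card {i\<in>Lam L. \<eta> i = 1} = n"
    using \<eta> by (auto simp: M_def)
  have "2 * J * (2 * real L - 1) - d * real L * (real L - 1) - 2 * h * real n \<le> H J lam h L \<eta>"
    using zero_line_energy_bound[OF cf zero J[THEN less_imp_le] _ large] gap
    unfolding H_eq_bond_energy[OF cf] plus d_def by simp
  moreover have "H J lam h L (bar_config L n)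
      = J * (4 * real L + 4 * real n + 4) - d * (real L * real L) - 2 * h * real n"
    unfolding H_eq_bond_energy[OF bar_config_configs] bond_energy_bar_config[OF n nL]
      card_nonzero_bar_config card_plus_bar_config[OF nL[THEN less_imp_le]] d_def by simp
  ultimately show "H J lam h L (bar_config L n) < H J lam h L \<eta>"
    using margin unfolding d_def[symmetric] by (simp add: algebra_simps)
qed

theorem lemma4p9:
  fixes lam h :: real
  assumes "0 < h" and "lam / 2 < h" and "h < lam"
  shows "\<exists>J0. \<forall>(J::real) (L::nat) \<eta>.
           J \<ge> J0 \<longrightarrow> cond_C_rest J lam h L \<longrightarrow>
           \<eta> \<in> M L (n_c_plus J lam h) \<longrightarrow> has_zero_column_or_row L \<eta> \<longrightarrow>
           \<not> is_minimizer_on J lam h L (M L (n_c_plus J lam h)) \<eta>"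
proof (intro exI[of _ "max (5 * (lam - h)) h"] allI impI)
  fix J :: real and L :: nat and \<eta>
  assume J: "max (5 * (lam - h)) h \<le> J" and C: "cond_C_rest J lam h L"
    and \<eta>: "\<eta> \<in> M L (n_c_plus J lam h)" and zero: "has_zero_column_or_row L \<eta>"
  define n where "n = n_c_plus J lam h"
  have d: "0 < lam - h" "lam - h < h" using assms by simp_all
  have n: "1 \<le> n" "real n \<le> ((2 * J + (lam - h)) / (2 * h) + 1) * ((2 * J + (lam - h)) / (2 * h))"
    using n_c_plus_bounds[of h lam J] assms J unfolding n_def by auto
  have "4 * J * real n + 6 * J < (lam - h) * real L"
    using volume_dominates_critical_size[OF d _ _ refl n(2)] J C by (auto simp: cond_C_rest_def)
  then have "bar_config L n \<in> M L n" "H J lam h L (bar_config L n) < H J lam h L \<eta>"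
    using bar_config_beats_zero_line[where J = J, OF \<eta>[folded n_def] zero d(1) _ n(1)] J d by auto
  then show "\<not> is_minimizer_on J lam h L (M L (n_c_plus J lam h)) \<eta>"
    unfolding is_minimizer_on_def n_def by force
qed

end
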